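(* Let $p$ be a prime and $A\subseteq\mathbb{F}_p$ satisfy $A-A\doteq\mathcal{R}_p$. Put $n:=|A|$ and fix any quadratic non-residue $\nu\in\mathcal{N}_p$. Then the $n^2$ sums $a'+\nu a''$ with $a',a''\in A$ are pairwise distinct, and the set $D:=\{a'+\nu a''\colon a',a''\in A\}$ is a $(p,n^2,n(n+1)/2)$-difference set in the additive group of $\mathbb{F}_p$.
   Context: $\mathcal{R}_p$ and $\mathcal{N}_p$ are the sets of quadratic residues and quadratic non-residues in $\mathbb{F}_p^\times$. $A-A\doteq S$ means: every element of $S$ has exactly one representation as $a'-a''$ with $a',a''\in A$, and every difference $a'-a''$ with $a'\ne a''$ in $A$ lies in $S$. For positive integers $v,k,\lambda$, a $(v,k,\lambda)$-difference set in an abelian group of order $v$ is a $k$-element subset $D$ such that every nonzero group element has exactly $\lambda$ representations as $d'-d''$ with $d',d''\in D$. *)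

theory Defs
  imports "HOL-Number_Theory.Number_Theory"
begin

text \<open>We model F_p as the integers {0..<p} with arithmetic mod p.\<close>

definition QR_set :: "int \<Rightarrow> int set" where
  "QR_set p = {x \<in> {1..<p}. QuadRes p x}"

definition QNR_set :: "int \<Rightarrow> int set" where
  "QNR_set p = {x \<in> {1..<p}. \<not> QuadRes p x}"

text \<open>A - A exactly equals S (in Z/pZ): unique representation of each s in S,
  and all nontrivial differences lie in S.\<close>
definition diff_exact :: "int \<Rightarrow> int set \<Rightarrow> int set \<Rightarrow> bool" where
  "diff_exact p A S \<longleftrightarrow>
     (\<forall>s\<in>S. \<exists>!(a1, a2). a1 \<in> A \<and> a2 \<in> A \<and> (a1 - a2) mod p = s) \<and>
     (\<forall>a1\<in>A. \<forall>a2\<in>A. a1 \<noteq> a2 \<longrightarrow> (a1 - a2) mod p \<in> S)"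

definition difference_set :: "int \<Rightarrow> nat \<Rightarrow> nat \<Rightarrow> int set \<Rightarrow> bool" where
  "difference_set v k lam D \<longleftrightarrow> D \<subseteq> {0..<v} \<and> card D = k \<and>
     (\<forall>x\<in>{1..<v}. card {(d1, d2). d1 \<in> D \<and> d2 \<in> D \<and> (d1 - d2) mod v = x} = lam)"

end

theory Submission
  imports Defs
begin

text \<open>Write \<open>r(u)\<close> for the number of representations \<open>u = a' - a''\<close> with \<open>a', a'' \<in> A\<close>.
  The hypothesis says \<open>r(u) = n, 1, 0\<close> according as \<open>u\<close> is zero, a residue or a non-residue;
  in particular \<open>n\<^sup>2 = n + (p - 1)/2\<close>. A vanishing combination \<open>(a\<^sub>1 - b\<^sub>1) + \<nu> (a\<^sub>2 - b\<^sub>2)\<close>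
  would write a residue-or-zero as a non-residue, so the map \<open>(a', a'') \<mapsto> a' + \<nu> a''\<close> is
  injective. The number of representations of \<open>x\<close> as a difference in \<open>D\<close> is the
  convolution \<open>\<Sum>\<^sub>v r(x - \<nu> v) r(v)\<close>; as \<open>r\<close> depends only on the Legendre symbol, this is
  invariant under multiplication by residues and by \<open>\<nu>\<close>, hence constant, say \<open>\<lambda>\<close>, on
  \<open>x \<noteq> 0\<close>. Counting all pairs of \<open>D\<close> gives \<open>n\<^sup>4 = n\<^sup>2 + (p - 1) \<lambda>\<close>, so \<open>\<lambda> = n(n+1)/2\<close>.\<close>

lemma Legendre_cong:
  assumes "[a = b] (mod p)"
  shows "Legendre a p = Legendre b p"
proof -
  have "[a = 0] (mod p) \<longleftrightarrow> [b = 0] (mod p)" "QuadRes p a \<longleftrightarrow> QuadRes p b"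
    unfolding QuadRes_def using assms cong_sym cong_trans by metis+
  then show ?thesis by (simp add: Legendre_def)
qed

lemma Legendre_eq_0_iff: "Legendre a p = 0 \<longleftrightarrow> p dvd a"
  by (auto simp: Legendre_def cong_0_iff)

lemma Legendre_mult:
  fixes p :: int
  assumes "prime p" "2 < p"
  shows "Legendre (a * b) p = Legendre a p * Legendre b p"
proof -
  define q where "q = nat p"
  have q: "prime q" "2 < q" "p = int q" using assms by (auto simp: q_def)
  let ?e = "(q - 1) div 2"
  have "[Legendre (a * b) q = a ^ ?e * b ^ ?e] (mod q)"
    using euler_criterion[OF q(1,2), of "a * b"] by (simp add: power_mult_distrib)
  moreover have "[a ^ ?e * b ^ ?e = Legendre a q * Legendre b q] (mod q)"
    using euler_criterion[OF q(1,2)] by (intro cong_mult) (simp_all add: cong_sym)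
  ultimately have cong: "[Legendre (a * b) q + 1 = Legendre a q * Legendre b q + 1] (mod q)"
    using cong_add_rcancel cong_trans by blast
  have range: "Legendre c q \<in> {-1, 0, 1}" for c
    by (simp add: Legendre_def)
  have "Legendre (a * b) q \<in> {-1, 0, 1}" "Legendre a q * Legendre b q \<in> {-1, 0, 1}"
    using range[of "a * b"] range[of a] range[of b] by auto
  \<comment> \<open>after shifting by one, both sides are residues below \<open>q > 2\<close>\<close>
  moreover have "0 \<le> x + 1 \<and> x + 1 < int q" if "x \<in> {-1, 0, 1}" for x
    using q(2) that by auto
  ultimately have "Legendre (a * b) q + 1 = Legendre a q * Legendre b q + 1"
    using cong cong_less_imp_eq_int by blast
  then show ?thesis using q(3) by simp
qed

lemma Legendre_of_residue_range:
  assumes "x \<in> {1..<p}"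
  shows "Legendre x p = (if QuadRes p x then 1 else -1)"
  using assms by (auto simp: Legendre_def cong_0_iff zdvd_not_zless)

lemma QR_set_eq: "QR_set p = {x \<in> {1..<p}. Legendre x p = 1}"
  by (auto simp: QR_set_def Legendre_of_residue_range split: if_splits)

lemma QNR_set_eq: "QNR_set p = {x \<in> {1..<p}. Legendre x p = -1}"
  by (auto simp: QNR_set_def Legendre_of_residue_range split: if_splits)

lemma card_QR_set:
  assumes p: "prime p" "2 < p" and nu: "Legendre \<nu> p = -1"
  shows "2 * card (QR_set p) = nat (p - 1)"
proof -
  define f where "f x = (\<nu> * x) mod p" for x
  have f_flip: "f x \<in> {1..<p} \<and> Legendre (f x) p = - Legendre x p" if "x \<in> {1..<p}" for x
  proof -
    have "Legendre (f x) p = - Legendre x p"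
      using nu Legendre_cong[of "f x" "\<nu> * x" p] by (simp add: f_def cong_def Legendre_mult[OF p])
    moreover have "Legendre x p \<noteq> 0" using that by (simp add: Legendre_of_residue_range)
    ultimately have "f x \<noteq> 0" by (auto simp: Legendre_def)
    moreover have "0 \<le> f x" "f x < p" using p(2) by (simp_all add: f_def)
    ultimately show ?thesis using \<open>Legendre (f x) p = - Legendre x p\<close> by simp

  qed
  have "inj_on f {1..<p}"
  proof (rule inj_onI)
    fix v w assume "v \<in> {1..<p}" "w \<in> {1..<p}" "f v = f w"
    moreover have "\<not> p dvd \<nu>" using nu by (simp add: Legendre_eq_0_iff[symmetric])
    ultimately have "[v = w] (mod p)" "0 \<le> v" "v < p" "0 \<le> w" "w < p"
      using p(1) by (auto simp: f_def mod_eq_dvd_iff cong_iff_dvd_diff prime_dvd_mult_iff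
          right_diff_distrib[symmetric])
    then show "v = w" using cong_less_imp_eq_int by blast
  qed
  moreover have sub: "QR_set p \<subseteq> {1..<p}" "QNR_set p \<subseteq> {1..<p}"
    by (auto simp: QR_set_def QNR_set_def)
  moreover have fin: "finite (QR_set p)" "finite (QNR_set p)"
    using sub finite_subset by blast+
  ultimately have "card (QR_set p) = card (QNR_set p)"
    using f_flip by (intro card_bij_eq[of f _ _ f]) (auto simp: QR_set_eq QNR_set_eq inj_on_subset)
  moreover have "{1..<p} = QR_set p \<union> QNR_set p" "QR_set p \<inter> QNR_set p = {}"
    by (auto simp: QR_set_def QNR_set_def)
  ultimately show ?thesis
    using card_Un_disjoint[OF fin] by (metis card_atLeastLessThan_int mult_2)
qed

lemma sum_affine_reindex_mod:
  fixes f :: "int \<Rightarrow> 'a::comm_monoid_add"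
  assumes "0 < m" "coprime c m" and periodic: "\<And>u v. [u = v] (mod m) \<Longrightarrow> f u = f v"
  shows "(\<Sum>v\<in>{0..<m}. f (c * v + d)) = (\<Sum>v\<in>{0..<m}. f v)"
proof -
  define g where "g v = (c * v + d) mod m" for v
  have "inj_on g {0..<m}"
  proof (rule inj_onI)
    fix v w assume "v \<in> {0..<m}" "w \<in> {0..<m}" "g v = g w"
    then have "m dvd c * (v - w)" "0 \<le> v" "v < m" "0 \<le> w" "w < m"
      by (auto simp: g_def mod_eq_dvd_iff algebra_simps)
    then show "v = w"
      using assms(2) by (auto simp: coprime_dvd_mult_right_iff coprime_commute cong_iff_dvd_diff
          intro: cong_less_imp_eq_int)
  qed
  moreover have "g ` {0..<m} \<subseteq> {0..<m}" using assms(1) by (auto simp: g_def)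
  ultimately have "bij_betw g {0..<m} {0..<m}"
    by (simp add: bij_betw_def endo_inj_surj)
  then have "(\<Sum>v\<in>{0..<m}. f (g v)) = (\<Sum>v\<in>{0..<m}. f v)"
    by (rule sum.reindex_bij_betw)
  moreover have "f (g v) = f (c * v + d)" for v
    by (rule periodic) (simp add: g_def cong_def)
  ultimately show ?thesis by simp
qed

lemma Legendre_convolution_const:
  fixes g :: "int \<Rightarrow> 'a::comm_semiring_1"
  assumes p: "prime p" "2 < p" and nu: "Legendre \<nu> p = -1" and x: "\<not> p dvd x"
  shows "(\<Sum>v\<in>{0..<p}. g (Legendre (x - \<nu> * v) p) * g (Legendre v p))
       = (\<Sum>v\<in>{0..<p}. g (Legendre (1 - \<nu> * v) p) * g (Legendre v p))"
proof -
  define S where "S y = (\<Sum>v\<in>{0..<p}. g (Legendre (y - \<nu> * v) p) * g (Legendre v p))" for y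
  have p_pos: "0 < p" using p by simp
  have coprime: "coprime c p" if "Legendre c p \<noteq> 0" for c
    using that p(1) prime_imp_coprime[of p c] by (simp add: Legendre_eq_0_iff coprime_commute)
  have periodic: "g (Legendre (y - \<nu> * u) p) * g (Legendre u p)
      = g (Legendre (y - \<nu> * u') p) * g (Legendre u' p)" if "[u = u'] (mod p)" for y u u'
    using that Legendre_cong cong_diff[OF cong_refl cong_scalar_left[OF that]] by metis
  have by_residue: "S (q * y) = S y" if q: "Legendre q p = 1" for q y
  proof -
    have "S (q * y) = (\<Sum>v\<in>{0..<p}.
        g (Legendre (q * y - \<nu> * (q * v + 0)) p) * g (Legendre (q * v + 0) p))"
      unfolding S_def using p_pos coprime[of q] q periodic
      by (intro sum_affine_reindex_mod[symmetric]) auto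
    also have "\<dots> = S y"
    proof -
      have "q * y - \<nu> * (q * v) = q * (y - \<nu> * v)" for v by (simp add: algebra_simps)
      then show ?thesis using q by (simp add: S_def Legendre_mult[OF p])
    qed
    finally show ?thesis .
  qed
  have by_nu: "S (\<nu> * y) = S y" for y
  proof -
    have "S (\<nu> * y) = (\<Sum>v\<in>{0..<p}.
        g (Legendre (\<nu> * y - \<nu> * (- \<nu> * v + y)) p) * g (Legendre (- \<nu> * v + y) p))"
      unfolding S_def using p_pos coprime[of \<nu>] nu periodic
      by (intro sum_affine_reindex_mod[symmetric]) (auto simp: Legendre_mult[OF p])
    also have "\<dots> = S y"
      using nu by (simp add: S_def Legendre_mult[OF p] algebra_simps)
    finally show ?thesis .
  qed
  have "Legendre x p = 1 \<or> Legendre x p = -1"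
    using x by (auto simp: Legendre_def cong_0_iff)
  then have "S x = S 1"
    using by_residue[of x 1] by_residue[of "\<nu> * x" 1] by_nu[of x] nu
    by (auto simp: Legendre_mult[OF p])
  then show ?thesis by (simp add: S_def)
qed

definition diff_count :: "int \<Rightarrow> int set \<Rightarrow> int \<Rightarrow> nat" where
  "diff_count m X x = card {(d1, d2). d1 \<in> X \<and> d2 \<in> X \<and> [d1 - d2 = x] (mod m)}"

lemma diff_count_cong:
  assumes "[x = y] (mod m)"
  shows "diff_count m X x = diff_count m X y"
proof -
  have "[d = x] (mod m) \<longleftrightarrow> [d = y] (mod m)" for d
    using assms cong_sym cong_trans by metis
  then show ?thesis by (simp add: diff_count_def)
qed

lemma difference_set_iff_diff_count:
  "difference_set v k lam D \<longleftrightarrow>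
     D \<subseteq> {0..<v} \<and> card D = k \<and> (\<forall>x\<in>{1..<v}. diff_count v D x = lam)"
proof -
  have "(d1 - d2) mod v = x \<longleftrightarrow> [d1 - d2 = x] (mod v)" if "x \<in> {1..<v}" for d1 d2 x
    using that by (simp add: cong_def)
  then have "\<forall>x\<in>{1..<v}. {(d1, d2). d1 \<in> D \<and> d2 \<in> D \<and> (d1 - d2) mod v = x}
      = {(d1, d2). d1 \<in> D \<and> d2 \<in> D \<and> [d1 - d2 = x] (mod v)}"
    by blast
  then show ?thesis by (simp add: difference_set_def diff_count_def)
qed

lemma diff_count_0:
  assumes "X \<subseteq> {0..<m}"
  shows "diff_count m X 0 = card X"
proof -
  have "[d1 - d2 = 0] (mod m) \<longleftrightarrow> d1 = d2" if "d1 \<in> X" "d2 \<in> X" for d1 d2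
    using that assms cong_less_imp_eq_int[of d1 m d2]
    by (auto simp: cong_0_iff cong_iff_dvd_diff[symmetric] subset_iff)
  then have "{(d1, d2). d1 \<in> X \<and> d2 \<in> X \<and> [d1 - d2 = 0] (mod m)} = (\<lambda>d. (d, d)) ` X"
    by auto
  then show ?thesis by (simp add: diff_count_def card_image inj_on_def)
qed

lemma card_eq_sum_cong_classes:
  fixes f :: "'a \<Rightarrow> int"
  assumes "finite S" "0 < m"
  shows "card S = (\<Sum>x\<in>{0..<m}. card {z \<in> S. [f z = x] (mod m)})"
proof -
  have "{z \<in> S. [f z = x] (mod m)} = {z \<in> S. f z mod m = x}" if "x \<in> {0..<m}" for x
    using that by (auto simp: cong_def)
  moreover have "(\<lambda>z. f z mod m) ` S \<subseteq> {0..<m}" using assms(2) by auto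
  ultimately show ?thesis
    using sum.group[OF assms(1) finite_atLeastLessThan_int,
        where g = "\<lambda>z. f z mod m" and h = "\<lambda>_. 1::nat"]
    by simp
qed

lemma sum_diff_count:
  assumes "finite X" "0 < m"
  shows "(\<Sum>x\<in>{0..<m}. diff_count m X x) = card X ^ 2"
proof -
  have "card (X \<times> X) = (\<Sum>x\<in>{0..<m}. card {z \<in> X \<times> X. [fst z - snd z = x] (mod m)})"
    using assms by (intro card_eq_sum_cong_classes) auto
  also have "\<dots> = (\<Sum>x\<in>{0..<m}. diff_count m X x)"
    unfolding diff_count_def by (intro sum.cong arg_cong[where f = card]) auto
  finally show ?thesis by (simp add: card_cartesian_product power2_eq_square)
qed

lemma card_combined_differences:
  assumes "finite X" "finite Y" "0 < m"
  shows "card {((a1, b1), (a2, b2)). a1 \<in> X \<and> b1 \<in> X \<and> a2 \<in> Y \<and> b2 \<in> Y \<and>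
                 [(a1 - b1) + c * (a2 - b2) = x] (mod m)}
       = (\<Sum>v\<in>{0..<m}. diff_count m X (x - c * v) * diff_count m Y v)"
  (is "card ?S = _")
proof -
  have "finite ?S"
    by (rule finite_subset[of _ "(X \<times> X) \<times> (Y \<times> Y)"]) (use assms in auto)
  then have "card ?S = (\<Sum>v\<in>{0..<m}. card {z \<in> ?S. [fst (snd z) - snd (snd z) = v] (mod m)})"
    using assms(3) by (rule card_eq_sum_cong_classes)
  also have "\<dots> = (\<Sum>v\<in>{0..<m}. diff_count m X (x - c * v) * diff_count m Y v)"
  proof (rule sum.cong[OF refl])
    fix v
    have "[(a1 - b1) + c * (a2 - b2) = x] (mod m) \<longleftrightarrow> [a1 - b1 = x - c * v] (mod m)"
      if "[a2 - b2 = v] (mod m)" for a1 b1 a2 b2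
    proof -
      have "[(a1 - b1) + c * (a2 - b2) = (a1 - b1) + c * v] (mod m)"
        using that by (intro cong_add cong_mult) auto
      then have "[(a1 - b1) + c * (a2 - b2) = x] (mod m) \<longleftrightarrow> [(a1 - b1) + c * v = x] (mod m)"
        using cong_sym cong_trans by metis
      also have "\<dots> \<longleftrightarrow> [a1 - b1 = x - c * v] (mod m)"
        by (simp add: cong_iff_dvd_diff algebra_simps)
      finally show ?thesis .
    qed
    then have "{z \<in> ?S. [fst (snd z) - snd (snd z) = v] (mod m)}
        = {(a1, b1). a1 \<in> X \<and> b1 \<in> X \<and> [a1 - b1 = x - c * v] (mod m)}
          \<times> {(a2, b2). a2 \<in> Y \<and> b2 \<in> Y \<and> [a2 - b2 = v] (mod m)}"
      by auto
    then show "card {z \<in> ?S. [fst (snd z) - snd (snd z) = v] (mod m)}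
        = diff_count m X (x - c * v) * diff_count m Y v"
      by (simp add: diff_count_def card_cartesian_product)
  qed
  finally show ?thesis .
qed

lemma diff_count_combination_image:
  fixes c m :: int
  defines "\<phi> \<equiv> \<lambda>(a1, a2). (a1 + c * a2) mod m"
  assumes "inj_on \<phi> (X \<times> Y)"
  shows "diff_count m (\<phi> ` (X \<times> Y)) x
       = card {((a1, b1), (a2, b2)). a1 \<in> X \<and> b1 \<in> X \<and> a2 \<in> Y \<and> b2 \<in> Y \<and>
                 [(a1 - b1) + c * (a2 - b2) = x] (mod m)}"
    (is "_ = card ?S")
proof -
  define \<psi> where "\<psi> = (\<lambda>((a1, b1), (a2, b2)). (\<phi> (a1, a2), \<phi> (b1, b2)))"
  have combine: "[\<phi> (a1, a2) - \<phi> (b1, b2) = x] (mod m)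
      \<longleftrightarrow> [(a1 - b1) + c * (a2 - b2) = x] (mod m)" for a1 a2 b1 b2
    by (simp add: \<phi>_def cong_def mod_diff_eq algebra_simps)
  have "inj_on \<psi> ?S"
    using assms(2) by (auto simp: \<psi>_def inj_on_def)
  then have "card (\<psi> ` ?S) = card ?S"
    by (rule card_image)
  moreover have "\<psi> ` ?S
      = {(d1, d2). d1 \<in> \<phi> ` (X \<times> Y) \<and> d2 \<in> \<phi> ` (X \<times> Y) \<and> [d1 - d2 = x] (mod m)}"
    by (auto simp: \<psi>_def combine image_iff) blast
  ultimately show ?thesis
    by (simp add: diff_count_def)
qed

lemma count_equation_solution:
  fixes n s :: nat
  assumes "n ^ 4 = n ^ 2 + 2 * (n ^ 2 - n) * s" "2 \<le> n"
  shows "s = n * (n + 1) div 2"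
proof -
  have "n \<le> n ^ 2" by (simp add: power2_eq_square)
  then have "int n ^ 4 = int n ^ 2 + 2 * (int n ^ 2 - int n) * int s"
    using arg_cong[OF assms(1), of int] by (simp add: of_nat_diff)
  then have "(int n * (int n - 1)) * (int n * (int n + 1) - 2 * int s) = 0"
    by (simp add: algebra_simps power4_eq_xxxx power2_eq_square)
  moreover have "int n * (int n - 1) \<noteq> 0" using assms(2) by simp
  ultimately have "int n * (int n + 1) = 2 * int s" by simp
  then have "int (n * (n + 1)) = int (2 * s)" by (simp add: algebra_simps)
  then have "n * (n + 1) = 2 * s" by (simp only: of_nat_eq_iff)
  then show ?thesis by simp
qed

locale QR_difference_basis =
  fixes p \<nu> :: int and A :: "int set"
  assumes prime: "prime p" and A_range: "A \<subseteq> {0..<p}"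
    and diff_exact: "diff_exact p A (QR_set p)" and nonresidue: "\<nu> \<in> QNR_set p"
begin

lemma finite_A: "finite A"
  using A_range finite_subset by blast

lemma Legendre_nu: "Legendre \<nu> p = -1"
  using nonresidue by (simp add: QNR_set_eq)

lemma p_gt_2: "2 < p"
proof -
  have "p \<noteq> 2"
  proof
    assume "p = 2"
    then have "\<nu> = 1" using nonresidue by (auto simp: QNR_set_def)
    moreover have "QuadRes 2 1" unfolding QuadRes_def by (rule exI[of _ 1]) simp
    ultimately show False using nonresidue \<open>p = 2\<close> by (simp add: QNR_set_def)
  qed
  moreover have "2 \<le> p" using prime by (rule prime_ge_2_int)
  ultimately show ?thesis by simp
qed

lemma Legendre_diff:
  assumes "a \<in> A" "b \<in> A" "a \<noteq> b"
  shows "Legendre (a - b) p = 1"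
proof -
  have "(a - b) mod p \<in> QR_set p" using diff_exact assms by (auto simp: diff_exact_def)
  then show ?thesis
    using Legendre_cong[of "(a - b) mod p" "a - b" p] by (simp add: QR_set_eq cong_def)
qed

lemma Legendre_diff_residue_or_0:
  assumes "a \<in> A" "b \<in> A"
  shows "Legendre (a - b) p \<in> {0, 1}"
  using assms Legendre_diff by (cases "a = b") (auto simp: Legendre_def)

definition weight :: "int \<Rightarrow> nat" where
  "weight l = (if l = 0 then card A else if l = 1 then 1 else 0)"

lemma diff_count_A: "diff_count p A u = weight (Legendre u p)"
proof -
  let ?P = "{(a, b). a \<in> A \<and> b \<in> A \<and> [a - b = u] (mod p)}"
  consider "Legendre u p = 0" | "Legendre u p = 1" | "Legendre u p = -1"
    unfolding Legendre_def by presburger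
  then show ?thesis
  proof cases
    case 1
    then have "[u = 0] (mod p)" by (simp add: Legendre_eq_0_iff cong_0_iff)
    then have "diff_count p A u = diff_count p A 0" by (rule diff_count_cong)
    then show ?thesis using 1 by (simp add: diff_count_0[OF A_range] weight_def)
  next
    case 2
    then have "\<not> p dvd u" by (auto simp: Legendre_eq_0_iff[symmetric])
    moreover have "0 \<le> u mod p" "u mod p < p" using p_gt_2 by simp_all
    ultimately have "u mod p \<in> {1..<p}" by (simp add: dvd_eq_mod_eq_0)
    moreover have "Legendre (u mod p) p = 1"
      using 2 Legendre_cong[of "u mod p" u p] by (simp add: cong_def)
    ultimately have "u mod p \<in> QR_set p" by (simp add: QR_set_eq)
    then have "\<exists>!(a, b). a \<in> A \<and> b \<in> A \<and> (a - b) mod p = u mod p"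
      using diff_exact by (simp add: diff_exact_def)
    then have "\<exists>!z. z \<in> ?P" by (simp add: cong_def)
    then obtain z where "?P = {z}" by blast
    then have "card ?P = 1" by simp
    then show ?thesis using 2 by (simp add: diff_count_def weight_def)
  next
    case 3
    have "Legendre u p \<in> {0, 1}" if "(a, b) \<in> ?P" for a b
      using that Legendre_diff_residue_or_0[of a b] Legendre_cong[of "a - b" u p] by auto
    then have "?P = {}" using 3 by fastforce
    then have "card ?P = 0" by (simp only: card.empty)
    then show ?thesis using 3 by (simp add: diff_count_def weight_def)
  qed
qed

lemma card_QR_set_eq: "card (QR_set p) = card A ^ 2 - card A"
proof -
  have "{0..<p} = insert 0 {1..<p}" using p_gt_2 by auto
  then have "card A ^ 2 = diff_count p A 0 + (\<Sum>x\<in>{1..<p}. diff_count p A x)"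
    using sum_diff_count[OF finite_A, of p] p_gt_2 by simp
  also have "(\<Sum>x\<in>{1..<p}. diff_count p A x) = (\<Sum>x\<in>{1..<p}. if Legendre x p = 1 then 1 else 0)"
    by (intro sum.cong) (auto simp: diff_count_A weight_def Legendre_of_residue_range)
  also have "\<dots> = card (QR_set p)"
    by (simp add: QR_set_eq sum.inter_filter[symmetric])
  finally show ?thesis using diff_count_0[OF A_range] by simp
qed

lemma combination_eq_0_imp:
  assumes "a1 \<in> A" "b1 \<in> A" "a2 \<in> A" "b2 \<in> A"
    and comb: "[(a1 - b1) + \<nu> * (a2 - b2) = 0] (mod p)"
  shows "a1 = b1 \<and> a2 = b2"
proof -
  have "[a1 - b1 = \<nu> * (b2 - a2)] (mod p)"
    using comb by (simp add: cong_iff_dvd_diff algebra_simps)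
  then have "Legendre (a1 - b1) p = Legendre \<nu> p * Legendre (b2 - a2) p"
    using Legendre_cong Legendre_mult[OF prime p_gt_2] by metis
  then have "a2 = b2"
    using Legendre_diff_residue_or_0[of a1 b1] Legendre_diff[of b2 a2] assms(1-4) Legendre_nu
    by fastforce
  then have "[a1 = b1] (mod p)"
    using comb by (simp add: cong_iff_dvd_diff)
  then have "a1 = b1"
    using assms(1,2) A_range cong_less_imp_eq_int by (meson atLeastLessThan_iff subsetD)
  with \<open>a2 = b2\<close> show ?thesis by simp
qed

abbreviation combination :: "int \<times> int \<Rightarrow> int" where
  "combination \<equiv> \<lambda>(a1, a2). (a1 + \<nu> * a2) mod p"

lemma inj_on_combination: "inj_on combination (A \<times> A)"
proof (rule inj_onI, clarify)
  fix a1 a2 b1 b2 assume "a1 \<in> A" "a2 \<in> A" "b1 \<in> A" "b2 \<in> A"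
    and "(a1 + \<nu> * a2) mod p = (b1 + \<nu> * b2) mod p"
  moreover from this have "[(a1 - b1) + \<nu> * (a2 - b2) = 0] (mod p)"
    by (simp add: cong_0_iff mod_eq_dvd_iff algebra_simps)
  ultimately show "a1 = b1 \<and> a2 = b2" by (intro combination_eq_0_imp)
qed

lemma diff_count_combination:
  "diff_count p (combination ` (A \<times> A)) x
     = (\<Sum>v\<in>{0..<p}. weight (Legendre (x - \<nu> * v) p) * weight (Legendre v p))"
  using diff_count_combination_image[OF inj_on_combination]
    card_combined_differences[OF finite_A finite_A] p_gt_2
  by (simp add: diff_count_A)

lemma combination_difference_set:
  "difference_set p ((card A)\<^sup>2) (card A * (card A + 1) div 2) (combination ` (A \<times> A))"
proof -
  let ?D = "combination ` (A \<times> A)" and ?n = "card A"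
  define lam where "lam = diff_count p ?D 1"
  have card_D: "card ?D = ?n\<^sup>2"
    using card_image[OF inj_on_combination] by (simp add: card_cartesian_product power2_eq_square)
  have D_range: "?D \<subseteq> {0..<p}" using p_gt_2 by auto
  have const: "diff_count p ?D x = lam" if "x \<in> {1..<p}" for x
    using that Legendre_convolution_const[OF prime p_gt_2 Legendre_nu, of x]
    by (simp add: lam_def diff_count_combination zdvd_not_zless)
  have p_minus_1: "nat (p - 1) = 2 * (?n\<^sup>2 - ?n)"
    using card_QR_set[OF prime p_gt_2 Legendre_nu] card_QR_set_eq by simp
  have "{0..<p} = insert 0 {1..<p}" using p_gt_2 by auto
  then have "(?n\<^sup>2)\<^sup>2 = diff_count p ?D 0 + (\<Sum>x\<in>{1..<p}. diff_count p ?D x)"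
    using sum_diff_count[of ?D p] card_D p_gt_2 finite_A by simp
  also have "\<dots> = ?n\<^sup>2 + 2 * (?n\<^sup>2 - ?n) * lam"
    using const diff_count_0[OF D_range] card_D p_minus_1 by simp
  finally have "?n ^ 4 = ?n\<^sup>2 + 2 * (?n\<^sup>2 - ?n) * lam" by simp
  moreover have "2 \<le> ?n"
  proof (rule ccontr)
    assume "\<not> 2 \<le> ?n"
    then have "?n = 0 \<or> ?n = 1" by auto
    then show False using p_minus_1 p_gt_2 by auto
  qed
  ultimately have "lam = ?n * (?n + 1) div 2" by (rule count_equation_solution)
  then show ?thesis
    using D_range card_D const by (simp add: difference_set_iff_diff_count)
qed

end

theorem claim1:
  fixes p \<nu> :: int and A :: "int set"
  assumes "prime p"
    and "A \<subseteq> {0..<p}"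
    and "diff_exact p A (QR_set p)"
    and "\<nu> \<in> QNR_set p"
  shows "inj_on (\<lambda>(a1, a2). (a1 + \<nu> * a2) mod p) (A \<times> A)
    \<and> difference_set p ((card A)\<^sup>2) (card A * (card A + 1) div 2)
        ((\<lambda>(a1, a2). (a1 + \<nu> * a2) mod p) ` (A \<times> A))"
proof -
  interpret QR_difference_basis p \<nu> A
    using assms by unfold_locales
  show ?thesis
    using inj_on_combination combination_difference_set by blast
qed

end
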